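(* Let $\mathbf R\subset\mathbb R^2$ be a bounded region of area $1$, and let $\mathbf u$ be a point of $\partial\mathbf R$ such that $\mathbf R$ lies on one side of some line through $\mathbf u$. For a point $O$ of $\mathbf R$, let $\mathcal P_O$ be the probability that the triangle $\triangle ABC$ contains $O$, where $A,B,C$ are independent and uniformly distributed in $\mathbf R$. Then $\lim_{O\to\mathbf u}\mathcal P_O=0$. *)

theory Defs
  imports "HOL-Analysis.Analysis" "HOL-Probability.Probability"
begin

definition unif :: "(real^2) set \<Rightarrow> (real^2) measure" where
  "unif R = uniform_measure lebesgue R"

definition triangle_prob :: "(real^2) set \<Rightarrow> real^2 \<Rightarrow> real" where
  "triangle_prob R p =
     measure (unif R \<Otimes>\<^sub>M (unif R \<Otimes>\<^sub>M unif R))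
       {(a, b, c). p \<in> convex hull {a, b, c}}"

end

theory Submission
  imports Defs
begin

text \<open>
  Let \<open>n \<noteq> 0\<close> be normal to a supporting line of \<open>R\<close> at \<open>u\<close>, so that \<open>n \<bullet> x \<le> n \<bullet> u\<close> on \<open>R\<close>.
  A triangle containing \<open>O\<close> has a vertex \<open>v\<close> with \<open>n \<bullet> O \<le> n \<bullet> v\<close>, so by the union bound
  \<open>P\<^sub>O\<close> is at most three times the area of the strip \<open>{v \<in> R. n \<bullet> O \<le> n \<bullet> v}\<close>.
  As \<open>O \<rightarrow> u\<close> these strips shrink to a subset of the line \<open>n \<bullet> v = n \<bullet> u\<close>, a null set,
  so by continuity of measure from above their areas tend to \<open>0\<close>.
\<close>

lemma convex_hull_halfspace_vertex:
  fixes n p :: "'a::real_inner"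
  assumes "p \<in> convex hull S"
  shows "\<exists>s\<in>S. n \<bullet> p \<le> n \<bullet> s"
proof (rule ccontr)
  assume "\<not> ?thesis"
  then have "S \<subseteq> {x. n \<bullet> x < n \<bullet> p}" by auto
  then have "convex hull S \<subseteq> {x. n \<bullet> x < n \<bullet> p}"
    by (intro hull_minimal convex_halfspace_lt)
  with assms show False by auto
qed

lemma measure_pair_measure_Times_prob:
  assumes "prob_space M" "prob_space N" "A \<in> sets M" "B \<in> sets N"
  shows "measure (M \<Otimes>\<^sub>M N) (A \<times> B) = measure M A * measure N B"
proof -
  interpret N: prob_space N by fact
  have "emeasure (M \<Otimes>\<^sub>M N) (A \<times> B) = emeasure M A * emeasure N B"
    using assms by (intro N.emeasure_pair_measure_Times)
  then show ?thesis by (simp add: measure_def enn2real_mult)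
qed

lemma measure_pair3_some_coordinate_le:
  assumes M: "prob_space M" and S: "S \<in> sets M"
    and E: "E \<subseteq> {(a, b, c). a \<in> S \<or> b \<in> S \<or> c \<in> S}"
  shows "measure (M \<Otimes>\<^sub>M (M \<Otimes>\<^sub>M M)) E \<le> 3 * measure M S"
proof (cases "E \<in> sets (M \<Otimes>\<^sub>M (M \<Otimes>\<^sub>M M))")
  case False
  then show ?thesis by (simp add: measure_notin_sets)
next
  case True
  interpret M: prob_space M by fact
  interpret MM: pair_prob_space M M ..
  interpret P: pair_prob_space M "M \<Otimes>\<^sub>M M" ..
  define \<Omega> where "\<Omega> = space M"
  have \<Omega>: "\<Omega> \<in> sets M" "measure M \<Omega> = 1" by (simp_all add: \<Omega>_def M.prob_space)
  define A1 A2 A3 where "A1 = S \<times> \<Omega> \<times> \<Omega>" and "A2 = \<Omega> \<times> S \<times> \<Omega>" and "A3 = \<Omega> \<times> \<Omega> \<times> S"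
  have sets: "A1 \<in> P.events" "A2 \<in> P.events" "A3 \<in> P.events"
    using S \<Omega> by (simp_all add: A1_def A2_def A3_def)
  have "E \<subseteq> \<Omega> \<times> \<Omega> \<times> \<Omega>"
    using sets.sets_into_space[OF True] by (simp add: space_pair_measure \<Omega>_def)
  with E have "E \<subseteq> A1 \<union> A2 \<union> A3"
    unfolding A1_def A2_def A3_def by blast
  then have "P.prob E \<le> P.prob (A1 \<union> A2 \<union> A3)"
    using sets by (intro P.finite_measure_mono) auto
  also have "\<dots> \<le> P.prob (A1 \<union> A2) + P.prob A3"
    using sets by (intro measure_Un_le) auto
  also have "\<dots> \<le> P.prob A1 + P.prob A2 + P.prob A3"
    using measure_Un_le[OF sets(1,2)] by simp
  also have "\<dots> = 3 * measure M S"
    using S \<Omega> M MM.prob_space_axioms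
    by (simp add: A1_def A2_def A3_def measure_pair_measure_Times_prob)
  finally show ?thesis .
qed

lemma halfspace_ge_lebesgue: "{x::'a::euclidean_space. c \<le> n \<bullet> x} \<in> sets lebesgue"
  by (metis borel_closed closed_halfspace_ge sets_completionI_sets sets_lborel)

lemma sets_unif [simp]: "sets (unif R) = sets lebesgue"
  by (simp add: unif_def)

lemma emeasure_lmeasurable_eq_1:
  assumes "R \<in> lmeasurable" "measure lebesgue R = 1"
  shows "emeasure lebesgue R = 1"
  using assms by (simp add: emeasure_eq_measure2)

lemma prob_space_unif:
  assumes "R \<in> lmeasurable" "measure lebesgue R = 1"
  shows "prob_space (unif R)"
  unfolding unif_def
  using emeasure_lmeasurable_eq_1[OF assms] by (intro prob_space_uniform_measure) simp_all

lemma measure_unif: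
  assumes "R \<in> lmeasurable" "measure lebesgue R = 1" "S \<in> sets lebesgue"
  shows "measure (unif R) S = measure lebesgue (R \<inter> S)"
  unfolding unif_def
  using emeasure_lmeasurable_eq_1[OF assms(1,2)] assms by simp

lemma triangle_prob_nonneg: "0 \<le> triangle_prob R p"
  by (simp add: triangle_prob_def)

lemma triangle_prob_le:
  assumes "R \<in> lmeasurable" "measure lebesgue R = 1" "S \<in> sets lebesgue"
    and "\<And>a b c. p \<in> convex hull {a, b, c} \<Longrightarrow> a \<in> S \<or> b \<in> S \<or> c \<in> S"
  shows "triangle_prob R p \<le> 3 * measure lebesgue (R \<inter> S)"
  unfolding triangle_prob_def measure_unif[OF assms(1-3), symmetric]
  using assms by (intro measure_pair3_some_coordinate_le prob_space_unif) auto

lemma triangle_prob_le_halfspace: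
  assumes "R \<in> lmeasurable" "measure lebesgue R = 1" "d \<le> n \<bullet> p"
  shows "triangle_prob R p \<le> 3 * measure lebesgue (R \<inter> {y. d \<le> n \<bullet> y})"
proof (rule triangle_prob_le[OF assms(1,2) halfspace_ge_lebesgue])
  fix a b c assume "p \<in> convex hull {a, b, c}"
  then have "\<exists>v\<in>{a, b, c}. n \<bullet> p \<le> n \<bullet> v" by (rule convex_hull_halfspace_vertex)
  with assms(3) show "a \<in> {y. d \<le> n \<bullet> y} \<or> b \<in> {y. d \<le> n \<bullet> y} \<or> c \<in> {y. d \<le> n \<bullet> y}"
    by auto
qed

lemma LIMSEQ_measure_halfspace_strip:
  fixes R :: "'a::euclidean_space set"
  assumes R: "R \<in> lmeasurable" and "n \<noteq> 0" and below: "\<forall>x\<in>R. n \<bullet> x \<le> c"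
  shows "(\<lambda>k. measure lebesgue (R \<inter> {x. c - inverse (real (Suc k)) \<le> n \<bullet> x})) \<longlonglongrightarrow> 0"
proof -
  define A where "A k = R \<inter> {x. c - inverse (real (Suc k)) \<le> n \<bullet> x}" for k
  have A_fin: "A k \<in> lmeasurable" for k
    unfolding A_def using R by (intro fmeasurable_Int_fmeasurable halfspace_ge_lebesgue)
  then have A_sets: "range A \<subseteq> sets lebesgue" by blast
  have "decseq A"
  proof (rule decseq_SucI)
    fix k
    have "inverse (real (Suc (Suc k))) \<le> inverse (real (Suc k))"
      by (simp add: le_imp_inverse_le)
    then show "A (Suc k) \<subseteq> A k"
      unfolding A_def by (intro Int_mono order_refl Collect_mono impI allI) linarith
  qed
  moreover have "emeasure lebesgue (A k) \<noteq> \<infinity>" for k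
    using fmeasurableD2[OF A_fin] by simp
  ultimately have lim: "(\<lambda>k. measure lebesgue (A k)) \<longlonglongrightarrow> measure lebesgue (\<Inter>k. A k)"
    using A_sets by (intro Lim_measure_decseq)
  have "(\<Inter>k. A k) \<subseteq> {x. n \<bullet> x = c}"
  proof safe
    fix x assume x: "x \<in> (\<Inter>k. A k)"
    have "(\<lambda>k. c - inverse (real (Suc k))) \<longlonglongrightarrow> c - 0"
      by (intro tendsto_diff tendsto_const LIMSEQ_inverse_real_of_nat)
    moreover have "c - inverse (real (Suc k)) \<le> n \<bullet> x" for k
      using x by (simp add: A_def)
    ultimately have "c - 0 \<le> n \<bullet> x"
      by (blast intro: LIMSEQ_le_const2)
    moreover have "n \<bullet> x \<le> c" using x below by (simp add: A_def)
    ultimately show "n \<bullet> x = c" by simp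
  qed
  moreover have "negligible {x. n \<bullet> x = c}"
    using \<open>n \<noteq> 0\<close> by (intro negligible_hyperplane) simp
  ultimately have "measure lebesgue (\<Inter>k. A k) = 0"
    by (meson negligible_imp_measure0 negligible_subset)
  with lim show ?thesis by (simp add: A_def)
qed

lemma tendsto_measure_halfspace_strip:
  fixes R :: "'a::euclidean_space set"
  assumes R: "R \<in> lmeasurable" and "n \<noteq> 0" and below: "\<forall>x\<in>R. n \<bullet> x \<le> c"
  shows "((\<lambda>t. measure lebesgue (R \<inter> {x. c - t \<le> n \<bullet> x})) \<longlongrightarrow> 0) (at_right 0)"
proof (rule order_tendstoI)
  fix a :: real assume "a > 0"
  with LIMSEQ_measure_halfspace_strip[OF assms]
  have "\<forall>\<^sub>F k in sequentially. measure lebesgue (R \<inter> {x. c - inverse (real (Suc k)) \<le> n \<bullet> x}) < a"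
    by (rule order_tendstoD)
  then obtain k where k: "measure lebesgue (R \<inter> {x. c - inverse (real (Suc k)) \<le> n \<bullet> x}) < a"
    by (meson eventually_sequentially order_refl)
  have "\<forall>\<^sub>F t in at_right 0. t < inverse (real (Suc k))"
    unfolding eventually_at_right_field by (intro exI[of _ "inverse (real (Suc k))"]) simp
  then show "\<forall>\<^sub>F t in at_right 0. measure lebesgue (R \<inter> {x. c - t \<le> n \<bullet> x}) < a"
  proof (rule eventually_mono)
    fix t assume "t < inverse (real (Suc k))"
    then have "R \<inter> {x. c - t \<le> n \<bullet> x} \<subseteq> R \<inter> {x. c - inverse (real (Suc k)) \<le> n \<bullet> x}"
      by (intro Int_mono order_refl Collect_mono impI allI) linarith
    then have "measure lebesgue (R \<inter> {x. c - t \<le> n \<bullet> x})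
        \<le> measure lebesgue (R \<inter> {x. c - inverse (real (Suc k)) \<le> n \<bullet> x})"
      using R by (intro measure_mono_fmeasurable fmeasurable_Int_fmeasurable) (auto simp: halfspace_ge_lebesgue)
    with k show "measure lebesgue (R \<inter> {x. c - t \<le> n \<bullet> x}) < a" by simp
  qed
qed (meson always_eventually measure_nonneg order.strict_trans2)

theorem corollary3p2:
  fixes R :: "(real^2) set" and u :: "real^2"
  assumes "R \<in> sets lebesgue"
    and "bounded R"
    and "measure lebesgue R = 1"
    and "u \<in> frontier R"
    and "\<exists>n::real^2. n \<noteq> 0 \<and> (\<forall>x\<in>R. n \<bullet> (x - u) \<le> 0)"
  shows "(triangle_prob R \<longlongrightarrow> 0) (at u within R)"
proof -
  obtain n :: "real^2" where "n \<noteq> 0" and below: "\<forall>x\<in>R. n \<bullet> x \<le> n \<bullet> u"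
    using assms(5) by (auto simp: inner_diff_right)
  have R: "R \<in> lmeasurable"
    using assms(1,2) by (simp add: bounded_set_imp_lmeasurable)
  define strip where "strip t = R \<inter> {y. n \<bullet> u - t \<le> n \<bullet> y}" for t
  have strip_small: "((\<lambda>t. measure lebesgue (strip t)) \<longlongrightarrow> 0) (at_right 0)"
    unfolding strip_def using R \<open>n \<noteq> 0\<close> below by (rule tendsto_measure_halfspace_strip)
  show ?thesis
  proof (rule order_tendstoI)
    fix a :: real assume "0 < a"
    then have "\<forall>\<^sub>F t in at_right 0. measure lebesgue (strip t) < a / 3"
      by (intro order_tendstoD(2)[OF strip_small]) simp
    then obtain t where "0 < t" and t: "measure lebesgue (strip t) < a / 3"
      unfolding eventually_at_right_field by (metis field_lbound_gt_zero)
    have "((\<lambda>x. n \<bullet> x) \<longlongrightarrow> n \<bullet> u) (at u within R)"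
      by (intro tendsto_inner tendsto_const tendsto_ident_at)
    then have "\<forall>\<^sub>F x in at u within R. n \<bullet> u - t < n \<bullet> x"
      by (rule order_tendstoD) (use \<open>0 < t\<close> in simp)
    then show "\<forall>\<^sub>F x in at u within R. triangle_prob R x < a"
    proof (rule eventually_mono)
      fix x assume "n \<bullet> u - t < n \<bullet> x"
      then have "triangle_prob R x \<le> 3 * measure lebesgue (strip t)"
        unfolding strip_def using R assms(3) by (intro triangle_prob_le_halfspace) simp_all
      with t show "triangle_prob R x < a" by simp
    qed
  qed (meson always_eventually triangle_prob_nonneg less_le_trans)
qed

end
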